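(* Let $K\ge2$ and $\theta=K$. Let $V_1,\dots,V_{K-1}$ be independent with $V_i\sim\mathrm{Beta}(\frac\theta K+1,(K-i)\frac\theta K)=\mathrm{Beta}(2,\theta-i)$, and set $Y_1^K=V_1$, $Y_i^K=(1-V_1)\cdots(1-V_{i-1})V_i$ for $2\le i\le K-1$. Fix $r\ge1$. Then, as $\theta=K\to\infty$, the family of laws of $(Y_1^K,\dots,Y_r^K)$ satisfies an LDP on $\Delta_r=\{(y_1,\dots,y_r): y_k\ge0,\ \sum_{k=1}^r y_k\le1\}$ with speed $\theta$ and rate function $$S_r(y_1,\dots,y_r)=\begin{cases}\log\dfrac{1}{1-\sum_{k=1}^r y_k},&\sum_{k=1}^r y_k<1,\\ \infty,&\text{otherwise.}\end{cases}$$
   Context: $(Y_1^K,\dots,Y_{K-1}^K)$ is the size-biased sampling of a symmetric $\mathrm{Dirichlet}(\theta/K,\dots,\theta/K)$ distribution. *)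

theory Defs
  imports "HOL-Probability.Probability"
begin

definition beta_measure :: "real \<Rightarrow> real \<Rightarrow> real measure" where
  "beta_measure a b = density lborel
     (\<lambda>x. ennreal (indicator {0<..<1} x * x powr (a - 1) * (1 - x) powr (b - 1) / Beta a b))"

(* V_i, i = 1..K-1 (stored at 0-based index j = i-1), independent, V_i ~ Beta(theta/K+1, (K-i) theta/K)
   with theta = K, i.e. Beta(2, K - i). *)
definition stick_space :: "nat \<Rightarrow> (nat \<Rightarrow> real) measure" where
  "stick_space K = PiM {..<K-1}
     (\<lambda>j. beta_measure (real K / real K + 1) ((real K - real (j + 1)) * (real K / real K)))"

(* (Y_1^K, ..., Y_r^K) as a vector y :: nat \<Rightarrow> real with y j = Y_{j+1}^K for j < r, y j = 0 for j \<ge> r.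
   Y_{j+1} = (1 - V_1)...(1 - V_j) V_{j+1}. *)
definition Yvec :: "nat \<Rightarrow> (nat \<Rightarrow> real) \<Rightarrow> (nat \<Rightarrow> real)" where
  "Yvec r v = (\<lambda>j. if j < r then (\<Prod>l<j. 1 - v l) * v j else 0)"

definition Ylaw :: "nat \<Rightarrow> nat \<Rightarrow> (nat \<Rightarrow> real) measure" where
  "Ylaw r K = distr (stick_space K) borel (Yvec r)"

(* Delta_r, embedded in nat \<Rightarrow> real (coordinates \<ge> r are 0); the product topology
   restricted to this set is the Euclidean topology of R^r *)
definition Delta :: "nat \<Rightarrow> (nat \<Rightarrow> real) set" where
  "Delta r = {y. (\<forall>j<r. 0 \<le> y j) \<and> (\<forall>j\<ge>r. y j = 0) \<and> (\<Sum>j<r. y j) \<le> 1}"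

definition S_rate :: "nat \<Rightarrow> (nat \<Rightarrow> real) \<Rightarrow> ereal" where
  "S_rate r y = (if (\<Sum>j<r. y j) < 1 then ereal (ln (1 / (1 - (\<Sum>j<r. y j)))) else \<infinity>)"

definition scaled_log_prob :: "real \<Rightarrow> 'a measure \<Rightarrow> 'a set \<Rightarrow> ereal" where
  "scaled_log_prob s M A = (if measure M A = 0 then - \<infinity> else ereal (ln (measure M A) / s))"

definition LDP :: "(nat \<Rightarrow> 'a::topological_space measure) \<Rightarrow> (nat \<Rightarrow> real) \<Rightarrow> 'a set
                    \<Rightarrow> ('a \<Rightarrow> ereal) \<Rightarrow> bool" where
  "LDP \<mu> s E I \<longleftrightarrow>
     (\<forall>x\<in>E. 0 \<le> I x) \<and>
     (\<forall>c::real. closedin (top_of_set E) {x\<in>E. I x \<le> ereal c}) \<and>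
     (\<forall>\<Gamma>. \<Gamma> \<in> sets borel \<and> \<Gamma> \<subseteq> E \<longrightarrow>
        - (INF x\<in>(top_of_set E) interior_of \<Gamma>. I x)
            \<le> liminf (\<lambda>n. scaled_log_prob (s n) (\<mu> n) \<Gamma>) \<and>
        limsup (\<lambda>n. scaled_log_prob (s n) (\<mu> n) \<Gamma>)
            \<le> - (INF x\<in>(top_of_set E) closure_of \<Gamma>. I x))"

end

theory Submission
  imports Defs "HOL-Real_Asymp.Real_Asymp"
begin

text \<open>
  Stick-breaking gives \<open>1 - (Y\<^sub>1 + \<dots> + Y\<^sub>r) = (1 - V\<^sub>1) \<cdots> (1 - V\<^sub>r)\<close>, a product of
  independent factors. For the upper bound, Markov's inequality with the moments
  \<open>E (1 - V\<^sub>j)\<^sup>-\<^sup>n \<le> K (K + 1)\<close>, \<open>n = K - r - 1\<close>, which are finite because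
  \<open>V\<^sub>j \<sim> Beta(2, K - j)\<close>, yields \<open>P(\<Prod> (1 - V\<^sub>j) \<le> t) \<le> t\<^sup>K\<^sup>-\<^sup>r\<^sup>-\<^sup>1 (K (K + 1))\<^sup>r\<close>.
  For the lower bound, a point \<open>y\<close> with \<open>\<Sum> y < 1\<close> is the image of
  \<open>w\<^sub>j = y\<^sub>j / (1 - y\<^sub>1 - \<dots> - y\<^sub>j\<^sub>-\<^sub>1)\<close>, and the stick-breaking map is continuous,
  so a neighbourhood of \<open>y\<close> contains the image of the box \<open>w\<^sub>j + e/2 \<le> V\<^sub>j \<le> w\<^sub>j + e\<close>.
  The Beta density is at least \<open>(e/2) (1 - w\<^sub>j - e)\<^sup>K\<close> there, so the box has probability
  at least \<open>(e/2)\<^sup>2\<^sup>r (\<Prod> (1 - w\<^sub>j - e))\<^sup>K\<close>; letting \<open>e \<rightarrow> 0\<close> gives the rate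
  \<open>- ln (\<Prod> (1 - w\<^sub>j)) = - ln (1 - \<Sum> y)\<close>.
\<close>

section \<open>Products of probability spaces and exponential rates\<close>

lemma (in product_prob_space) measure_PiM_Collect:
  assumes "J \<subseteq> I" "finite J" "\<And>i. i \<in> J \<Longrightarrow> X i \<in> sets (M i)"
  shows "measure (Pi\<^sub>M I M) {x\<in>space (Pi\<^sub>M I M). \<forall>i\<in>J. x i \<in> X i} = (\<Prod>i\<in>J. measure (M i) (X i))"
  using emeasure_PiM_Collect[OF assms]
  by (simp add: emeasure_eq_measure M.emeasure_eq_measure prod_ennreal prod_nonneg)

lemma (in product_prob_space) nn_integral_PiM_prod:
  assumes J: "J \<subseteq> I" "finite J" and f: "\<And>i. i \<in> J \<Longrightarrow> f i \<in> borel_measurable (M i)"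
  shows "(\<integral>\<^sup>+x. (\<Prod>i\<in>J. f i (x i)) \<partial>Pi\<^sub>M I M) = (\<Prod>i\<in>J. integral\<^sup>N (M i) (f i))"
proof -
  have meas: "(\<lambda>x. \<Prod>i\<in>J. f i (x i)) \<in> borel_measurable (Pi\<^sub>M J M)"
    using f by (intro borel_measurable_prod_ennreal) (auto intro: measurable_compose[OF measurable_component_singleton])
  have "(\<integral>\<^sup>+x. (\<Prod>i\<in>J. f i (x i)) \<partial>Pi\<^sub>M I M) = (\<integral>\<^sup>+x. (\<Prod>i\<in>J. f i (restrict x J i)) \<partial>Pi\<^sub>M I M)"
    by (intro nn_integral_cong prod.cong) auto
  also have "\<dots> = (\<integral>\<^sup>+x. (\<Prod>i\<in>J. f i (x i)) \<partial>distr (Pi\<^sub>M I M) (Pi\<^sub>M J M) (\<lambda>x. restrict x J))"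
    using J meas by (subst nn_integral_distr) (auto intro: measurable_restrict_subset)
  also have "\<dots> = (\<Prod>i\<in>J. integral\<^sup>N (M i) (f i))"
    using J f by (simp add: distr_PiM_restrict_finite product_nn_integral_prod)
  finally show ?thesis .
qed

lemma tendsto_fun_componentwise:
  fixes f :: "'a \<Rightarrow> 'i \<Rightarrow> 'b::topological_space"
  shows "(f \<longlongrightarrow> l) F \<longleftrightarrow> (\<forall>i. ((\<lambda>x. f x i) \<longlongrightarrow> l i) F)"
  using limitin_componentwise[of "\<lambda>i. euclidean" UNIV f l F]
  by (simp add: euclidean_product_topology)

lemma limsup_scaled_log_prob_le:
  assumes bound: "\<forall>\<^sub>F K in sequentially. 0 < B K \<and> measure (M K) A \<le> B K"
    and lim: "(\<lambda>K. ln (B K) / real K) \<longlonglongrightarrow> L"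
  shows "limsup (\<lambda>K. scaled_log_prob (real K) (M K) A) \<le> ereal L"
proof -
  have "\<forall>\<^sub>F K in sequentially. scaled_log_prob (real K) (M K) A \<le> ereal (ln (B K) / real K)"
    using bound eventually_gt_at_top[of 0]
  proof eventually_elim
    case (elim K)
    show ?case
    proof (cases "measure (M K) A = 0")
      case False
      then have "0 < measure (M K) A"
        using measure_nonneg[of "M K" A] by (simp add: less_le)
      then have "ln (measure (M K) A) \<le> ln (B K)"
        using elim by simp
      then show ?thesis
        using False elim by (simp add: scaled_log_prob_def divide_right_mono)
    qed (simp add: scaled_log_prob_def)
  qed
  then have "limsup (\<lambda>K. scaled_log_prob (real K) (M K) A) \<le> limsup (\<lambda>K. ereal (ln (B K) / real K))"
    by (rule Limsup_mono)
  also have "\<dots> = ereal L"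
    using lim by (intro lim_imp_Limsup tendsto_ereal) simp_all
  finally show ?thesis .
qed

lemma liminf_scaled_log_prob_ge:
  assumes bound: "\<forall>\<^sub>F K in sequentially. 0 < B K \<and> B K \<le> measure (M K) A"
    and lim: "(\<lambda>K. ln (B K) / real K) \<longlonglongrightarrow> L"
  shows "ereal L \<le> liminf (\<lambda>K. scaled_log_prob (real K) (M K) A)"
proof -
  have "\<forall>\<^sub>F K in sequentially. ereal (ln (B K) / real K) \<le> scaled_log_prob (real K) (M K) A"
    using bound eventually_gt_at_top[of 0]
  proof eventually_elim
    case (elim K)
    then have "ln (B K) \<le> ln (measure (M K) A)" and "measure (M K) A \<noteq> 0"
      by simp_all
    then show ?case
      using elim by (simp add: scaled_log_prob_def divide_right_mono)
  qed
  then have "liminf (\<lambda>K. ereal (ln (B K) / real K)) \<le> liminf (\<lambda>K. scaled_log_prob (real K) (M K) A)"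
    by (rule Liminf_mono)
  moreover have "liminf (\<lambda>K. ereal (ln (B K) / real K)) = ereal L"
    using lim by (intro lim_imp_Liminf tendsto_ereal) simp_all
  ultimately show ?thesis by simp
qed

lemma tendsto_ln_exponential_poly_div:
  assumes "c > 0" "p > 0"
  shows "(\<lambda>K. ln (c * p ^ K * (real K * (real K + 1)) ^ m) / real K) \<longlonglongrightarrow> ln p"
proof -
  have "\<forall>\<^sub>F K in sequentially.
      ln c / real K + ln p + real m * (ln (real K * (real K + 1)) / real K)
        = ln (c * p ^ K * (real K * (real K + 1)) ^ m) / real K"
    using eventually_gt_at_top[of 0]
  proof eventually_elim
    case (elim K)
    then have "0 < real K * (real K + 1)" by simp
    then have "ln (c * p ^ K * (real K * (real K + 1)) ^ m) = ln c + real K * ln p + real m * ln (real K * (real K + 1))"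
      using assms elim by (simp add: ln_mult ln_realpow)
    then show ?case
      using elim by (simp add: field_simps)
  qed
  moreover have "(\<lambda>K. ln c / real K) \<longlonglongrightarrow> 0" "(\<lambda>K. ln (real K * (real K + 1)) / real K) \<longlonglongrightarrow> 0"
    by real_asymp+
  then have "(\<lambda>K. ln c / real K + ln p + real m * (ln (real K * (real K + 1)) / real K))
      \<longlonglongrightarrow> 0 + ln p + real m * 0"
    by (intro tendsto_intros)
  ultimately show ?thesis
    by (simp add: tendsto_cong)
qed

section \<open>The Beta(2, b) law\<close>

lemma Beta_2_left:
  fixes b :: real
  assumes "b > 0"
  shows "Beta 2 b = 1 / (b * (b + 1))"
proof -
  have nz: "b \<notin> \<int>\<^sub>\<le>\<^sub>0" using assms by (auto elim!: nonpos_Ints_cases)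
  have "Beta 1 b = 1 / b"
    unfolding Beta_def using Gamma_plus1[OF nz] Gamma_eq_zero_iff[of b] nz assms
    by (simp add: add.commute)
  moreover have "(1 + b) * Beta (1 + 1) b = 1 * Beta 1 b"
    using Beta_plus1_left[of 1 b] by simp
  ultimately have "Beta 2 b + b * Beta 2 b = 1 / b" by (simp add: algebra_simps)
  moreover have "Beta 2 b * (b * (b + 1)) = b * (Beta 2 b + b * Beta 2 b)"
    by (simp add: algebra_simps)
  ultimately have "Beta 2 b * (b * (b + 1)) = 1"
    using assms by simp
  then show ?thesis using assms by (simp add: eq_divide_eq)
qed

lemma beta_measure_2_eq:
  assumes "b > 0"
  shows "beta_measure 2 b =
    density lborel (\<lambda>x. ennreal (indicator {0<..<1} x * (x * (1 - x) powr (b - 1)) * (b * (b + 1))))"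
  unfolding beta_measure_def Beta_2_left[OF assms]
  by (intro arg_cong[where f = "density lborel"] ext) (simp add: indicator_def)

lemma prob_space_beta_measure_2:
  assumes b: "b > 0"
  shows "prob_space (beta_measure 2 b)"
proof
  have "((\<lambda>x. x powr (2 - 1) * (1 - x) powr (b - 1) / Beta 2 b) has_integral 1) {0<..<1}"
    using has_integral_divide[OF has_integral_Beta_real[of 2 b], of "Beta 2 b"] b
    by (simp add: has_integral_Icc_iff_Ioo Beta_2_left)
  then have "(\<integral>\<^sup>+x. ennreal (x powr (2 - 1) * (1 - x) powr (b - 1) / Beta 2 b) * indicator {0<..<1} x \<partial>lborel) = ennreal 1"
    by (intro nn_integral_has_integral_lebesgue') (use b Beta_2_left[OF b] in auto)
  also have "(\<integral>\<^sup>+x. ennreal (x powr (2 - 1) * (1 - x) powr (b - 1) / Beta 2 b) * indicator {0<..<1} x \<partial>lborel)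
      = (\<integral>\<^sup>+x. ennreal (indicator {0<..<1} x * x powr (2 - 1) * (1 - x) powr (b - 1) / Beta 2 b) \<partial>lborel)"
    by (intro nn_integral_cong) (simp add: indicator_def)
  finally show "emeasure (beta_measure 2 b) (space (beta_measure 2 b)) = 1"
    unfolding beta_measure_def by (simp add: emeasure_density)
qed

lemma emeasure_beta_measure_2_Icc_ge:
  assumes b: "b \<ge> 1" and ac: "0 < a" "a < c" "c < 1" and N: "b - 1 \<le> real N"
  shows "ennreal ((c - a) * (a * (1 - c) ^ N)) \<le> emeasure (beta_measure 2 b) {a..c}"
proof -
  have bb: "1 \<le> b * (b + 1)"
    using mult_mono[of 1 b 1 "b + 1"] b by simp
  have "ennreal ((c - a) * (a * (1 - c) ^ N)) = (\<integral>\<^sup>+x. ennreal (a * (1 - c) ^ N) * indicator {a..c} x \<partial>lborel)"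
    using ac by (subst nn_integral_cmult_indicator) (auto simp: ennreal_mult' mult.commute)
  also have "\<dots> \<le> (\<integral>\<^sup>+x. ennreal (indicator {0<..<1} x * (x * (1 - x) powr (b - 1)) * (b * (b + 1))) * indicator {a..c} x \<partial>lborel)"
  proof (intro nn_integral_mono)
    fix x :: real
    show "ennreal (a * (1 - c) ^ N) * indicator {a..c} x
        \<le> ennreal (indicator {0<..<1} x * (x * (1 - x) powr (b - 1)) * (b * (b + 1))) * indicator {a..c} x"
    proof (cases "x \<in> {a..c}")
      case True
      then have x: "a \<le> x" "x \<le> c" by auto
      have "(1 - c) ^ N \<le> (1 - x) powr N"
        using x ac by (simp add: powr_realpow[symmetric] powr_mono2)
      also have "\<dots> \<le> (1 - x) powr (b - 1)"
        using x ac N by (intro powr_mono') auto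
      finally have "a * (1 - c) ^ N \<le> x * (1 - x) powr (b - 1)"
        using x ac by (intro mult_mono) auto
      also have "\<dots> \<le> x * (1 - x) powr (b - 1) * (b * (b + 1))"
        using mult_left_mono[OF bb, of "x * (1 - x) powr (b - 1)"] x ac by simp
      finally show ?thesis
        using True x ac by (simp add: indicator_def ennreal_leI)
    qed simp
  qed
  also have "\<dots> = emeasure (beta_measure 2 b) {a..c}"
    using b by (simp add: beta_measure_2_eq emeasure_density)
  finally show ?thesis .
qed

lemma nn_integral_beta_measure_2_inverse_power_le:
  assumes b: "b \<ge> 1" and l: "real l \<le> b - 1"
  shows "(\<integral>\<^sup>+x. (if x < 1 then ennreal (1 / (1 - x) ^ l) else \<top>) \<partial>beta_measure 2 b)
    \<le> ennreal (b * (b + 1))"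
proof -
  have "(\<integral>\<^sup>+x. (if x < 1 then ennreal (1 / (1 - x) ^ l) else \<top>) \<partial>beta_measure 2 b)
      = (\<integral>\<^sup>+x. ennreal (indicator {0<..<1} x * (x * (1 - x) powr (b - 1)) * (b * (b + 1)))
            * (if x < 1 then ennreal (1 / (1 - x) ^ l) else \<top>) \<partial>lborel)"
    using b by (simp add: beta_measure_2_eq nn_integral_density)
  also have "\<dots> \<le> (\<integral>\<^sup>+x. ennreal (b * (b + 1)) * indicator {0<..<1::real} x \<partial>lborel)"
  proof (intro nn_integral_mono)
    fix x :: real
    show "ennreal (indicator {0<..<1} x * (x * (1 - x) powr (b - 1)) * (b * (b + 1)))
            * (if x < 1 then ennreal (1 / (1 - x) ^ l) else \<top>)
          \<le> ennreal (b * (b + 1)) * indicator {0<..<1} x"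
    proof (cases "0 < x \<and> x < 1")
      case True
      have split: "(1 - x) powr (b - 1) = (1 - x) powr (b - 1 - l) * (1 - x) ^ l"
        using True by (simp add: powr_diff powr_realpow)
      have "(1 - x) powr (b - 1 - l) \<le> 1"
        using True l by (intro powr_le1) auto
      then have "x * (1 - x) powr (b - 1 - l) \<le> 1"
        using True by (intro mult_le_one) auto
      then have "x * (1 - x) powr (b - 1 - l) * (b * (b + 1)) \<le> b * (b + 1)"
        using mult_right_mono[of _ 1 "b * (b + 1)"] b by simp
      moreover have "x * (1 - x) powr (b - 1) * (b * (b + 1)) * (1 / (1 - x) ^ l)
          = x * (1 - x) powr (b - 1 - l) * (b * (b + 1))"
        using True by (simp add: split)
      ultimately show ?thesis
        using True b by (simp add: ennreal_mult'[symmetric] indicator_def)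
    qed (simp add: indicator_def)
  qed
  also have "\<dots> = ennreal (b * (b + 1))"
    by (subst nn_integral_cmult_indicator) auto
  finally show ?thesis .
qed

section \<open>Stick-breaking\<close>

lemma sum_stick_breaking:
  fixes v :: "nat \<Rightarrow> 'a::comm_ring_1"
  shows "(\<Sum>j<n. (\<Prod>l<j. 1 - v l) * v j) = 1 - (\<Prod>l<n. 1 - v l)"
  by (induction n) (auto simp: algebra_simps)

lemma one_minus_sum_Yvec: "1 - (\<Sum>j<r. Yvec r v j) = (\<Prod>l<r. 1 - v l)"
  unfolding Yvec_def using sum_stick_breaking[of v r] by simp

lemma Yvec_in_Delta:
  assumes "\<And>j. j < r \<Longrightarrow> 0 \<le> v j \<and> v j \<le> 1"
  shows "Yvec r v \<in> Delta r"
proof -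
  have "0 \<le> (\<Prod>l<r. 1 - v l)"
    using assms by (auto intro!: prod_nonneg)
  then have "(\<Sum>j<r. Yvec r v j) \<le> 1"
    using one_minus_sum_Yvec[of r v] by linarith
  then show ?thesis
    using assms unfolding Delta_def by (auto simp: Yvec_def intro!: mult_nonneg_nonneg prod_nonneg)
qed

definition stick_inverse :: "(nat \<Rightarrow> real) \<Rightarrow> nat \<Rightarrow> real" where
  "stick_inverse y j = y j / (1 - (\<Sum>l<j. y l))"

lemma Yvec_stick_inverse:
  assumes y: "y \<in> Delta r" and y1: "(\<Sum>j<r. y j) < 1"
  defines "w \<equiv> stick_inverse y"
  shows "\<And>j. j < r \<Longrightarrow> 0 \<le> w j \<and> w j < 1"
    and "(\<Prod>l<r. 1 - w l) = 1 - (\<Sum>l<r. y l)"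
    and "Yvec r w = y"
proof -
  have y0: "0 \<le> y j" if "j < r" for j
    using y that by (simp add: Delta_def)
  have partial: "(\<Sum>l<j. y l) < 1" if "j \<le> r" for j
    using sum_mono2[of "{..<r}" "{..<j}" y] that y0 y1 by force
  show w01: "0 \<le> w j \<and> w j < 1" if "j < r" for j
    using partial[of "Suc j"] partial[of j] y0[OF that] that by (simp add: w_def stick_inverse_def divide_less_eq)
  have prod_w: "(\<Prod>l<j. 1 - w l) = 1 - (\<Sum>l<j. y l)" if "j \<le> r" for j
    using that
  proof (induction j)
    case (Suc j)
    have "0 < 1 - (\<Sum>l<j. y l)"
      using partial[of j] Suc.prems by simp
    then have "(1 - (\<Sum>l<j. y l)) * (1 - w j) = 1 - (\<Sum>l<Suc j. y l)"
      by (simp add: w_def stick_inverse_def field_simps)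
    then show ?case
      using Suc by simp
  qed simp
  then show "(\<Prod>l<r. 1 - w l) = 1 - (\<Sum>l<r. y l)" by simp
  show "Yvec r w = y"
  proof
    fix j
    show "Yvec r w j = y j"
    proof (cases "j < r")
      case True
      have "0 < 1 - (\<Sum>l<j. y l)"
        using partial[of j] True by simp
      then show ?thesis
        using True prod_w[of j] by (simp add: Yvec_def w_def stick_inverse_def)
    qed (use y in \<open>simp add: Yvec_def Delta_def\<close>)
  qed
qed

lemma Yvec_locally_in_open:
  assumes U: "open U" "Yvec r w \<in> U"
  shows "\<exists>d>0. \<forall>v. (\<forall>j<r. \<bar>v j - w j\<bar> < d) \<longrightarrow> Yvec r v \<in> U"
proof (rule ccontr)
  assume "\<not> ?thesis"
  then have "\<exists>v. (\<forall>j<r. \<bar>v j - w j\<bar> < inverse (real (Suc n))) \<and> Yvec r v \<notin> U" for n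
    by (meson inverse_positive_iff_positive of_nat_0_less_iff zero_less_Suc)
  then obtain vs where close: "\<And>n j. j < r \<Longrightarrow> \<bar>vs n j - w j\<bar> < inverse (real (Suc n))"
    and outside: "\<And>n. Yvec r (vs n) \<notin> U"
    by metis
  have vs_lim: "(\<lambda>n. vs n j) \<longlonglongrightarrow> w j" if "j < r" for j
  proof -
    have "(\<lambda>n. vs n j - w j) \<longlonglongrightarrow> 0"
      using close[OF that] by (intro Lim_null_comparison[OF _ LIMSEQ_inverse_real_of_nat]) (simp add: less_imp_le)
    then show ?thesis by (rule LIM_zero_cancel)
  qed
  have "(\<lambda>n. Yvec r (vs n)) \<longlonglongrightarrow> Yvec r w"
    unfolding tendsto_fun_componentwise
  proof
    fix j
    show "(\<lambda>n. Yvec r (vs n) j) \<longlonglongrightarrow> Yvec r w j"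
    proof (cases "j < r")
      case True
      then have "(\<lambda>n. (\<Prod>l<j. 1 - vs n l) * vs n j) \<longlonglongrightarrow> (\<Prod>l<j. 1 - w l) * w j"
        by (intro tendsto_mult tendsto_prod tendsto_diff tendsto_const vs_lim) auto
      then show ?thesis
        using True by (simp add: Yvec_def)
    qed (simp add: Yvec_def)
  qed
  then have "\<forall>\<^sub>F n in sequentially. Yvec r (vs n) \<in> U"
    using U by (rule topological_tendstoD)
  then show False
    using outside by (auto simp: eventually_sequentially)
qed

section \<open>Probability bounds for the stick-breaking law\<close>

text \<open>
  Only the factors \<open>j < K - 1\<close> enter \<open>stick_space K\<close>; clamping the second parameter at \<open>1\<close>
  makes every factor a probability measure, as the locale \<open>product_prob_space\<close> requires.
\<close>

definition stick_factor :: "nat \<Rightarrow> nat \<Rightarrow> real measure" where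
  "stick_factor K j = beta_measure 2 (max 1 (real K - real j - 1))"

lemma stick_space_eq: "K > 0 \<Longrightarrow> stick_space K = Pi\<^sub>M {..<K-1} (stick_factor K)"
  unfolding stick_space_def stick_factor_def
  by (intro PiM_cong) (auto simp: max_def algebra_simps)

lemma sets_stick_factor [simp, measurable_cong]: "sets (stick_factor K j) = sets borel"
  by (simp add: stick_factor_def beta_measure_def)

lemma product_prob_space_stick_factor: "product_prob_space (stick_factor K)"
  by (auto simp: product_prob_space_def product_prob_space_axioms_def product_sigma_finite_def
      stick_factor_def prob_space_beta_measure_2 prob_space_imp_sigma_finite)

lemma measurable_stick_component [measurable]:
  "j \<in> I \<Longrightarrow> (\<lambda>v. v j) \<in> borel_measurable (Pi\<^sub>M I (stick_factor K))"
  using measurable_component_singleton[of j I "stick_factor K"] by simp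

lemma borel_measurable_stick_remainder:
  "{..<r} \<subseteq> I \<Longrightarrow> (\<lambda>v. \<Prod>l<r. 1 - v l) \<in> borel_measurable (Pi\<^sub>M I (stick_factor K))"
  by (intro borel_measurable_prod) auto

lemma borel_measurable_Yvec:
  assumes "{..<r} \<subseteq> I"
  shows "Yvec r \<in> borel_measurable (Pi\<^sub>M I (stick_factor K))"
proof (rule measurable_coordinatewise_then_product)
  fix j
  have "(\<lambda>v. (\<Prod>l<j. 1 - v l) * v j) \<in> borel_measurable (Pi\<^sub>M I (stick_factor K))" if "j < r"
    using that assms by (intro borel_measurable_times borel_measurable_stick_remainder) auto
  then show "(\<lambda>v. Yvec r v j) \<in> borel_measurable (Pi\<^sub>M I (stick_factor K))"
    by (cases "j < r") (simp_all add: Yvec_def)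
qed

lemma measure_Ylaw:
  assumes K: "r + 2 \<le> K" and G: "G \<in> sets borel"
  shows "measure (Ylaw r K) G
    = measure (Pi\<^sub>M {..<K-1} (stick_factor K)) (Yvec r -` G \<inter> space (Pi\<^sub>M {..<K-1} (stick_factor K)))"
  using K G borel_measurable_Yvec[of r "{..<K-1}" K]
  by (simp add: Ylaw_def stick_space_eq measure_distr)

lemma one_le_prod_inverse_power_if_prod_le:
  fixes v :: "nat \<Rightarrow> real"
  assumes s: "s > 0" and le: "(\<Prod>l<r. 1 - v l) \<le> s"
  shows "1 \<le> ennreal (s ^ n) * (\<Prod>j<r. if v j < 1 then ennreal (1 / (1 - v j) ^ n) else \<top>)"
proof (cases "\<forall>j<r. v j < 1")
  case True
  then have pos: "0 < (\<Prod>l<r. 1 - v l)"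
    by (auto intro!: prod_pos)
  have "1 \<le> s ^ n * (1 / (\<Prod>j<r. 1 - v j) ^ n)"
    using power_mono[OF le, of n] pos by (simp add: field_simps)
  moreover have "(\<Prod>j<r. if v j < 1 then ennreal (1 / (1 - v j) ^ n) else \<top>) = ennreal (\<Prod>j<r. 1 / (1 - v j) ^ n)"
    using True by (simp, subst prod_ennreal) auto
  moreover have "(\<Prod>j<r. 1 / (1 - v j) ^ n) = 1 / (\<Prod>j<r. 1 - v j) ^ n"
    by (simp add: prod_dividef prod_power_distrib)
  ultimately show ?thesis
    using s pos by (simp add: ennreal_mult'[symmetric] ennreal_leI del: ennreal_1)
next
  case False
  then have "(\<Prod>j<r. if v j < 1 then ennreal (1 / (1 - v j) ^ n) else \<top>) = \<top>"
    unfolding ennreal_prod_eq_top by auto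
  then show ?thesis
    using s by (simp add: ennreal_mult_top)
qed

lemma nn_integral_stick_factor_inverse_power_le:
  assumes "j < r" "r + 2 \<le> K"
  shows "(\<integral>\<^sup>+x. (if x < 1 then ennreal (1 / (1 - x) ^ (K - r - 1)) else \<top>) \<partial>stick_factor K j)
    \<le> ennreal (real K * (real K + 1))"
proof -
  have b: "max 1 (real K - real j - 1) = real K - real j - 1"
    using assms by simp
  have "(\<integral>\<^sup>+x. (if x < 1 then ennreal (1 / (1 - x) ^ (K - r - 1)) else \<top>) \<partial>stick_factor K j)
      \<le> ennreal ((real K - real j - 1) * (real K - real j - 1 + 1))"
    unfolding stick_factor_def b
    by (rule nn_integral_beta_measure_2_inverse_power_le) (use assms in auto)
  also have "\<dots> \<le> ennreal (real K * (real K + 1))"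
    using assms by (intro ennreal_leI mult_mono) auto
  finally show ?thesis .
qed

lemma measure_stick_remainder_le:
  assumes K: "r + 2 \<le> K" and s: "s > 0"
  defines "P \<equiv> Pi\<^sub>M {..<K-1} (stick_factor K)"
  shows "measure P {v \<in> space P. (\<Prod>l<r. 1 - v l) \<le> s} \<le> s ^ (K - r - 1) * (real K * (real K + 1)) ^ r"
proof -
  interpret product_prob_space "stick_factor K" "{..<K-1}"
    by (rule product_prob_space_stick_factor)
  define n where "n = K - r - 1"
  define g where "g x = (if x < 1 then ennreal (1 / (1 - x) ^ n) else \<top>)" for x :: real
  define A where "A = {v \<in> space P. (\<Prod>l<r. 1 - v l) \<le> s}"
  have rK: "{..<r} \<subseteq> {..<K-1}" using K by auto
  have A: "A \<in> sets P"
    using borel_measurable_stick_remainder[OF rK] unfolding A_def P_def by measurable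
  have "g \<in> borel_measurable borel"
    unfolding g_def by measurable
  then have g_meas: "g \<in> borel_measurable (stick_factor K j)" for j
    by (subst measurable_cong_sets[OF sets_stick_factor refl])
  \<comment> \<open>Markov's inequality for \<open>\<Prod>j<r. (1 - v j)\<^sup>-\<^sup>n\<close>\<close>
  have "emeasure P A \<le> (\<integral>\<^sup>+v. ennreal (s ^ n) * (\<Prod>j<r. g (v j)) \<partial>P)"
    using A one_le_prod_inverse_power_if_prod_le[OF s]
    by (simp flip: nn_integral_indicator, intro nn_integral_mono) (auto simp: A_def g_def indicator_def)
  also have "\<dots> = ennreal (s ^ n) * (\<integral>\<^sup>+v. (\<Prod>j<r. g (v j)) \<partial>P)"
  proof (intro nn_integral_cmult borel_measurable_prod_ennreal)
    fix j assume "j \<in> {..<r}"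
    then show "(\<lambda>v. g (v j)) \<in> borel_measurable P"
      unfolding P_def using rK
      by (intro measurable_compose[OF measurable_component_singleton[of j] g_meas]) auto
  qed
  also have "\<dots> = ennreal (s ^ n) * (\<Prod>j<r. integral\<^sup>N (stick_factor K j) g)"
    unfolding P_def using rK g_meas by (subst nn_integral_PiM_prod) auto
  also have "\<dots> \<le> ennreal (s ^ n) * (\<Prod>j<r. ennreal (real K * (real K + 1)))"
    using K unfolding g_def n_def
    by (intro mult_left_mono prod_mono_ennreal nn_integral_stick_factor_inverse_power_le) auto
  also have "\<dots> = ennreal (s ^ n * (real K * (real K + 1)) ^ r)"
    using s by (subst prod_ennreal, simp, subst ennreal_mult[symmetric]) auto
  finally have "emeasure P A \<le> ennreal (s ^ n * (real K * (real K + 1)) ^ r)" .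
  moreover have "emeasure P A = ennreal (measure P A)"
    unfolding P_def by (rule P.emeasure_eq_measure)
  ultimately have "ennreal (measure P A) \<le> ennreal (s ^ n * (real K * (real K + 1)) ^ r)"
    by simp
  then show ?thesis
    using s unfolding A_def n_def by (simp add: ennreal_le_iff)
qed

lemma measure_stick_box_ge:
  assumes K: "r + 2 \<le> K" and e: "e > 0" and w: "\<And>j. j < r \<Longrightarrow> 0 \<le> w j \<and> w j + e < 1"
  defines "P \<equiv> Pi\<^sub>M {..<K-1} (stick_factor K)"
  shows "(e / 2) ^ (2 * r) * (\<Prod>j<r. 1 - (w j + e)) ^ K
    \<le> measure P {v \<in> space P. \<forall>j<r. w j + e / 2 \<le> v j \<and> v j \<le> w j + e}"
proof -
  interpret product_prob_space "stick_factor K" "{..<K-1}"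
    by (rule product_prob_space_stick_factor)
  have box_ge: "(e / 2) ^ 2 * (1 - (w j + e)) ^ K \<le> measure (stick_factor K j) {w j + e / 2 .. w j + e}"
    if j: "j < r" for j
  proof -
    have "(e / 2) ^ 2 * (1 - (w j + e)) ^ K \<le> (w j + e - (w j + e / 2)) * ((w j + e / 2) * (1 - (w j + e)) ^ K)"
      using w[OF j] e by (simp add: power2_eq_square mult_right_mono)
    moreover have "ennreal ((w j + e - (w j + e / 2)) * ((w j + e / 2) * (1 - (w j + e)) ^ K))
        \<le> emeasure (stick_factor K j) {w j + e / 2 .. w j + e}"
      unfolding stick_factor_def
      by (rule emeasure_beta_measure_2_Icc_ge) (use w[OF j] e in auto)
    ultimately show ?thesis
      by (simp add: M.emeasure_eq_measure ennreal_le_iff)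
  qed
  have "(e / 2) ^ (2 * r) * (\<Prod>j<r. 1 - (w j + e)) ^ K = (\<Prod>j<r. (e / 2) ^ 2 * (1 - (w j + e)) ^ K)"
    by (simp add: prod.distrib power_mult prod_power_distrib)
  also have "\<dots> \<le> (\<Prod>j<r. measure (stick_factor K j) {w j + e / 2 .. w j + e})"
    using w e by (intro prod_mono conjI box_ge) (auto intro!: mult_nonneg_nonneg zero_le_power dest: w)
  also have "\<dots> = measure P {v \<in> space P. \<forall>j\<in>{..<r}. v j \<in> {w j + e / 2 .. w j + e}}"
    unfolding P_def using K by (intro measure_PiM_Collect[symmetric]) auto
  finally show ?thesis by (simp add: Ball_def)
qed

lemma measure_Ylaw_le:
  assumes K: "r + 2 \<le> K" and G: "G \<in> sets borel" and s: "s > 0"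
    and remainder: "\<And>y. y \<in> G \<Longrightarrow> 1 - (\<Sum>j<r. y j) \<le> s"
  shows "measure (Ylaw r K) G \<le> s ^ (K - r - 1) * (real K * (real K + 1)) ^ r"
proof -
  let ?P = "Pi\<^sub>M {..<K-1} (stick_factor K)"
  interpret product_prob_space "stick_factor K" "{..<K-1}"
    by (rule product_prob_space_stick_factor)
  have "{..<r} \<subseteq> {..<K-1}"
    using K by auto
  note borel_measurable_stick_remainder[OF this, measurable]
  have "{v \<in> space ?P. (\<Prod>l<r. 1 - v l) \<le> s} \<in> sets ?P"
    by measurable
  moreover have "Yvec r -` G \<inter> space ?P \<subseteq> {v \<in> space ?P. (\<Prod>l<r. 1 - v l) \<le> s}"
    using remainder by (auto simp flip: one_minus_sum_Yvec)
  ultimately have "measure ?P (Yvec r -` G \<inter> space ?P) \<le> measure ?P {v \<in> space ?P. (\<Prod>l<r. 1 - v l) \<le> s}"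
    by (rule P.finite_measure_mono[rotated])
  also have "\<dots> \<le> s ^ (K - r - 1) * (real K * (real K + 1)) ^ r"
    by (rule measure_stick_remainder_le[OF K s])
  finally show ?thesis
    by (simp add: measure_Ylaw[OF K G])
qed

lemma measure_Ylaw_ge:
  assumes K: "r + 2 \<le> K" and G: "G \<in> sets borel" and e: "e > 0"
    and w: "\<And>j. j < r \<Longrightarrow> 0 \<le> w j \<and> w j + e < 1"
    and box: "\<And>v. \<forall>j<r. w j + e / 2 \<le> v j \<and> v j \<le> w j + e \<Longrightarrow> Yvec r v \<in> G"
  shows "(e / 2) ^ (2 * r) * (\<Prod>j<r. 1 - (w j + e)) ^ K \<le> measure (Ylaw r K) G"
proof -
  let ?P = "Pi\<^sub>M {..<K-1} (stick_factor K)"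
  interpret product_prob_space "stick_factor K" "{..<K-1}"
    by (rule product_prob_space_stick_factor)
  have "(e / 2) ^ (2 * r) * (\<Prod>j<r. 1 - (w j + e)) ^ K
      \<le> measure ?P {v \<in> space ?P. \<forall>j<r. w j + e / 2 \<le> v j \<and> v j \<le> w j + e}"
    by (rule measure_stick_box_ge[OF K e w])
  also have "\<dots> \<le> measure ?P (Yvec r -` G \<inter> space ?P)"
    using box K G by (intro P.finite_measure_mono measurable_sets[OF borel_measurable_Yvec]) auto
  finally show ?thesis
    by (simp add: measure_Ylaw[OF K G])
qed

section \<open>The large deviation principle\<close>

lemma S_rate_nonneg: "y \<in> Delta r \<Longrightarrow> 0 \<le> S_rate r y"
  by (auto simp: S_rate_def Delta_def intro!: sum_nonneg)

lemma S_rate_le_iff: "S_rate r y \<le> ereal c \<longleftrightarrow> (\<Sum>j<r. y j) \<le> 1 - exp (- c)"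
proof (cases "(\<Sum>j<r. y j) < 1")
  case True
  then have "S_rate r y \<le> ereal c \<longleftrightarrow> - c \<le> ln (1 - (\<Sum>j<r. y j))"
    by (simp add: S_rate_def ln_div) arith
  also have "\<dots> \<longleftrightarrow> exp (- c) \<le> 1 - (\<Sum>j<r. y j)"
    using True by (simp add: ln_ge_iff)
  finally show ?thesis by linarith
next
  case False
  moreover have "\<not> (\<Sum>j<r. y j) \<le> 1 - exp (- c)"
    using False exp_gt_zero[of "- c"] by linarith
  ultimately show ?thesis
    by (simp add: S_rate_def)
qed

lemma S_rate_geD:
  assumes "ereal c \<le> S_rate r y"
  shows "1 - (\<Sum>j<r. y j) \<le> exp (- c)"
proof (cases "(\<Sum>j<r. y j) < 1")
  case True
  then have "ln (1 - (\<Sum>j<r. y j)) \<le> ln (exp (- c))"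
    using assms by (simp add: S_rate_def ln_div)
  then show ?thesis
    using True by (subst (asm) ln_le_cancel_iff) auto
next
  case False
  then show ?thesis
    using exp_gt_zero[of "- c"] by linarith
qed

lemma closedin_S_rate_sublevel: "closedin (top_of_set (Delta r)) {y \<in> Delta r. S_rate r y \<le> ereal c}"
proof -
  have "continuous_on UNIV (\<lambda>y :: nat \<Rightarrow> real. \<Sum>j<r. y j)"
    by (intro continuous_on_sum) simp
  then have "closed {y :: nat \<Rightarrow> real. (\<Sum>j<r. y j) \<le> 1 - exp (- c)}"
    by (intro closed_Collect_le continuous_on_const)
  moreover have "{y \<in> Delta r. S_rate r y \<le> ereal c} = Delta r \<inter> {y. (\<Sum>j<r. y j) \<le> 1 - exp (- c)}"
    by (auto simp: S_rate_le_iff)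
  ultimately show ?thesis
    by (simp add: closedin_closed_Int)
qed

lemma limsup_Ylaw_le:
  assumes G: "G \<in> sets borel" and t: "t > 0"
    and remainder: "\<And>y. y \<in> G \<Longrightarrow> 1 - (\<Sum>j<r. y j) \<le> t"
  shows "limsup (\<lambda>K. scaled_log_prob (real K) (Ylaw r K) G) \<le> ereal (ln t)"
proof (rule limsup_scaled_log_prob_le)
  show "\<forall>\<^sub>F K in sequentially. 0 < 1 / t ^ (r + 1) * t ^ K * (real K * (real K + 1)) ^ r
      \<and> measure (Ylaw r K) G \<le> 1 / t ^ (r + 1) * t ^ K * (real K * (real K + 1)) ^ r"
    using eventually_ge_at_top[of "r + 2"]
  proof eventually_elim
    case (elim K)
    then have "t ^ (K - r - 1) = 1 / t ^ (r + 1) * t ^ K"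
      using t by (simp add: power_diff)
    then show ?case
      using measure_Ylaw_le[OF elim G t remainder] elim t by simp
  qed
  show "(\<lambda>K. ln (1 / t ^ (r + 1) * t ^ K * (real K * (real K + 1)) ^ r) / real K) \<longlonglongrightarrow> ln t"
    using t by (intro tendsto_ln_exponential_poly_div) auto
qed

lemma Ylaw_upper_bound:
  assumes G: "G \<in> sets borel"
  shows "limsup (\<lambda>K. scaled_log_prob (real K) (Ylaw r K) G) \<le> - (INF y\<in>G. S_rate r y)"
proof -
  let ?L = "limsup (\<lambda>K. scaled_log_prob (real K) (Ylaw r K) G)"
  have bound: "?L \<le> ereal (- c)" if c: "ereal c \<le> (INF y\<in>G. S_rate r y)" for c
  proof -
    have "ereal c \<le> S_rate r y" if "y \<in> G" for y
      using c INF_lower[OF that, of "S_rate r"] by (rule order_trans)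
    then have "?L \<le> ereal (ln (exp (- c)))"
      by (intro limsup_Ylaw_le G) (auto intro: S_rate_geD)
    then show ?thesis by simp
  qed
  show ?thesis
  proof (cases "INF y\<in>G. S_rate r y")
    case PInf
    then have "?L \<le> ereal B" for B
      using bound[of "- B"] by simp
    then show ?thesis
      using ereal_bot by (simp add: PInf)
  qed (use bound in simp_all)
qed

lemma liminf_Ylaw_ge:
  assumes G: "G \<in> sets borel" and e: "e > 0"
    and w: "\<And>j. j < r \<Longrightarrow> 0 \<le> w j \<and> w j + e < 1"
    and box: "\<And>v. \<forall>j<r. w j + e / 2 \<le> v j \<and> v j \<le> w j + e \<Longrightarrow> Yvec r v \<in> G"
  shows "ereal (ln (\<Prod>j<r. 1 - (w j + e))) \<le> liminf (\<lambda>K. scaled_log_prob (real K) (Ylaw r K) G)"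
proof (rule liminf_scaled_log_prob_ge)
  have p: "0 < (\<Prod>j<r. 1 - (w j + e))"
    using w by (intro prod_pos) auto
  show "\<forall>\<^sub>F K in sequentially. 0 < (e / 2) ^ (2 * r) * (\<Prod>j<r. 1 - (w j + e)) ^ K
      \<and> (e / 2) ^ (2 * r) * (\<Prod>j<r. 1 - (w j + e)) ^ K \<le> measure (Ylaw r K) G"
    using eventually_ge_at_top[of "r + 2"]
    by eventually_elim (use p e measure_Ylaw_ge[OF _ G e w box] in auto)
  show "(\<lambda>K. ln ((e / 2) ^ (2 * r) * (\<Prod>j<r. 1 - (w j + e)) ^ K) / real K) \<longlonglongrightarrow> ln (\<Prod>j<r. 1 - (w j + e))"
    using tendsto_ln_exponential_poly_div[of "(e / 2) ^ (2 * r)" _ 0] p e by simp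
qed

lemma Ylaw_lower_bound:
  assumes G: "G \<in> sets borel" and y: "y \<in> top_of_set (Delta r) interior_of G"
  shows "- S_rate r y \<le> liminf (\<lambda>K. scaled_log_prob (real K) (Ylaw r K) G)"
proof (cases "(\<Sum>j<r. y j) < 1")
  case False
  then show ?thesis by (simp add: S_rate_def)
next
  case True
  let ?L = "liminf (\<lambda>K. scaled_log_prob (real K) (Ylaw r K) G)"
  obtain U where U: "open U" "y \<in> U" "Delta r \<inter> U \<subseteq> G"
    using y unfolding interior_of_def openin_open by auto
  have "y \<in> Delta r"
    using y interior_of_subset_topspace by fastforce
  define w where "w = stick_inverse y"
  note w = Yvec_stick_inverse[OF \<open>y \<in> Delta r\<close> True, folded w_def]
  obtain d where d: "d > 0" "\<And>v. \<forall>j<r. \<bar>v j - w j\<bar> < d \<Longrightarrow> Yvec r v \<in> U"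
    using Yvec_locally_in_open[OF U(1)] U(2) w(3) by blast
  have "\<forall>\<^sub>F e in at_right 0. 0 < e \<and> e < d \<and> (\<forall>j\<in>{..<r}. w j + e < 1)"
  proof (intro eventually_conj eventually_ball_finite ballI)
    fix j assume "j \<in> {..<r}"
    then show "\<forall>\<^sub>F e in at_right 0. w j + e < 1"
      using eventually_at_right_real[of 0 "1 - w j"] w(1)[of j] by (auto elim: eventually_mono)
  qed (use eventually_at_right_real[OF d(1)] in \<open>auto simp: eventually_at_right_less elim: eventually_mono\<close>)
  then have "\<forall>\<^sub>F e in at_right 0. ereal (ln (\<Prod>j<r. 1 - (w j + e))) \<le> ?L"
  proof eventually_elim
    case (elim e)
    show ?case
    proof (rule liminf_Ylaw_ge[OF G])
      fix v assume v: "\<forall>j<r. w j + e / 2 \<le> v j \<and> v j \<le> w j + e"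
      have "Yvec r v \<in> Delta r"
        using v w(1) elim by (intro Yvec_in_Delta) force
      moreover have "Yvec r v \<in> U"
        using v elim by (intro d(2)) force
      ultimately show "Yvec r v \<in> G"
        using U(3) by blast
    qed (use elim w(1) in auto)
  qed
  moreover have "((\<lambda>e. ereal (ln (\<Prod>j<r. 1 - (w j + e)))) \<longlongrightarrow> ereal (ln (\<Prod>j<r. 1 - (w j + 0)))) (at_right 0)"
    using w(1) by (intro tendsto_intros) (auto simp: prod_pos dest: less_imp_neq)
  ultimately have "ereal (ln (\<Prod>j<r. 1 - (w j + 0))) \<le> ?L"
    by (intro tendsto_upperbound) auto
  then show ?thesis
    using True w(2) by (simp add: S_rate_def ln_div)
qed

theorem theorem2p7:
  fixes r :: nat
  assumes "r \<ge> 1"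
  shows "LDP (\<lambda>K. Ylaw r K) (\<lambda>K. real K) (Delta r) (S_rate r)"
  unfolding LDP_def
proof (intro conjI allI impI ballI)
  fix G :: "(nat \<Rightarrow> real) set"
  assume G: "G \<in> sets borel \<and> G \<subseteq> Delta r"
  show "- (INF y\<in>top_of_set (Delta r) interior_of G. S_rate r y) \<le> liminf (\<lambda>K. scaled_log_prob (real K) (Ylaw r K) G)"
    unfolding ereal_SUP_uminus_eq[symmetric] using G by (intro SUP_least Ylaw_lower_bound) auto
  have "(INF y\<in>top_of_set (Delta r) closure_of G. S_rate r y) \<le> (INF y\<in>G. S_rate r y)"
    using G by (intro INF_superset_mono closure_of_subset) auto
  then show "limsup (\<lambda>K. scaled_log_prob (real K) (Ylaw r K) G) \<le> - (INF y\<in>top_of_set (Delta r) closure_of G. S_rate r y)"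
    using Ylaw_upper_bound[of G r] G by (simp add: order_trans)
qed (simp_all add: S_rate_nonneg closedin_S_rate_sublevel)

end
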